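(* Let $\psi:L\to\mathcal{H}_3(\mathbb{Z})$, $L\subseteq S^*$, be a Cayley automatic representation of the Heisenberg group, and let $L_H,L_{H_1},w_0,R_\varphi,R_{p_1},R_{p_2}$ be as in the context. Assume there exist FA-recognizable relations $R_0,R_1,R_2\subseteq S^*\times S^*$ such that $L_H\triangleleft R_0=R_\varphi$, $R_1\triangleright L_{H_1}=R_{p_1}$, $L_H\triangleleft R_2=R_{p_2}$, and $R_2\triangleright\{w_0\}=R_{p_2}\triangleright\{w_0\}$. Then the function $h(n)=\max\{d_A(\pi(w),\psi(w)) : w\in L,|w|\le n\}$ satisfies $\mathfrak{e}\preceq h$. In particular, $h\not\preceq f$ for every $f\in\mathfrak{F}$ with $f\prec\mathfrak{e}$.
   Context: $\mathcal{H}_3(\mathbb{Z})$ is the group of integer matrices $\begin{pmatrix}1&x&z\\0&1&y\\0&0&1\end{pmatrix}$, identified with triples $(x,y,z)\in\mathbb{Z}^3$. Let $s,p,q$ be the elements $(1,0,0),(0,1,0),(0,0,1)$; for $g=(x,y,z)$, $gs=(x+1,y,z)$, $gp=(x,y+1,x+z)$, $gq=(x,y,z+1)$. Let $A=\{e,s,p,q\}$, $S=A\cup A^{-1}$, $\pi:S^*\to\mathcal{H}_3(\mathbb{Z})$ the evaluation map, $d_A$ the word metric. $H=\{(x,0,z)\}\cong\mathbb{Z}^2$ is the subgroup generated by $s,q$, written as column vectors $[x;z]$. Endomorphisms of $H$: $\varphi([x;z])=[x;x+z]$ (matrix $\begin{pmatrix}1&0\\1&1\end{pmatrix}$), $p_1([x;z])=[x;0]$,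 $p_2([x;z])=[0;z]$. $H_1=p_1(H)=\langle s\rangle$, $H_2=p_2(H)=\langle q\rangle$. A Cayley automatic representation is a bijection $\psi:L\to G$ from a regular $L\subseteq S^*$ such that for each $a\in A$ the relation $\{(\psi^{-1}(g),\psi^{-1}(ga))\}$ is FA-recognizable, where a relation is FA-recognizable if the language of convolutions (parallel readings of the strings with shorter ones padded by a new symbol $\diamond$) is regular. Set $L_H=\psi^{-1}(H)$, $L_{H_1}=\psi^{-1}(H_1)$, $L_{H_2}=\psi^{-1}(H_2)$, $w_0=\psi^{-1}(e)$, and for $\theta\in\{\varphi,p_1,p_2\}$, $R_\theta=\{(w,\psi^{-1}(\theta(\psi(w)))) : w\in L_H\}$. For $R\subseteq S^*\times S^*$ and $X\subseteq S^*$: $X\triangleleft R=\{(u,v)\in R: u\in X\}$ and $R\triangleright X=\{(u,v)\in R: v\in X\}$. $\mathfrak{e}(n)=\exp(n)$. $\mathfrak{F}$ is the set of nondecreasing functions from some interval $[Q,\infty)\cap\mathbb{N}$ to the nonnegative reals; $g\preceq f$ means there exist $N\ge0$ and positive integers $K,M$ with $g(n)\le Kf(Mn)$ for all $n\ge N$; $g\prec f$ means $g\preceq f$ but not $f\preceq g$. *)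

theory Defs
  imports Complex_Main
begin

type_synonym heis = "int \<times> int \<times> int"

text \<open>(x,y,z) stands for the matrix [[1,x,z],[0,1,y],[0,0,1]]; matrix product.\<close>
fun hmult :: "heis \<Rightarrow> heis \<Rightarrow> heis" where
  "hmult (x, y, z) (x', y', z') = (x + x', y + y', z + z' + x * y')"

definition hone :: heis where "hone = (0, 0, 0)"

text \<open>Symbols of S = A \<union> A^{-1}, A = {e,s,p,q}; note e^{-1} = e.\<close>
datatype gen = Ge | Gs | Gp | Gq | Gs_inv | Gp_inv | Gq_inv

fun gval :: "gen \<Rightarrow> heis" where
  "gval Ge = (0, 0, 0)"
| "gval Gs = (1, 0, 0)"
| "gval Gp = (0, 1, 0)"
| "gval Gq = (0, 0, 1)"
| "gval Gs_inv = (-1, 0, 0)"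
| "gval Gp_inv = (0, -1, 0)"
| "gval Gq_inv = (0, 0, -1)"

definition heval :: "gen list \<Rightarrow> heis" where
  "heval w = foldl (\<lambda>g a. hmult g (gval a)) hone w"

definition dA :: "heis \<Rightarrow> heis \<Rightarrow> nat" where
  "dA g h = (LEAST n. \<exists>w. length w = n \<and> hmult g (heval w) = h)"

definition regular :: "'a list set \<Rightarrow> bool" where
  "regular L \<longleftrightarrow> (\<exists>(Qs :: nat set) (\<delta> :: nat \<Rightarrow> 'a \<Rightarrow> nat) q0 F.
      finite Qs \<and> q0 \<in> Qs \<and> (\<forall>q\<in>Qs. \<forall>a. \<delta> q a \<in> Qs) \<and> F \<subseteq> Qs \<and>
      L = {w. foldl \<delta> q0 w \<in> F})"

text \<open>Convolution; the padding symbol \<diamond> is None.\<close>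
definition conv :: "'a list \<Rightarrow> 'b list \<Rightarrow> ('a option \<times> 'b option) list" where
  "conv u v = map (\<lambda>i. (if i < length u then Some (u ! i) else None,
                         if i < length v then Some (v ! i) else None))
                  [0..<max (length u) (length v)]"

definition fa_rel :: "('a list \<times> 'b list) set \<Rightarrow> bool" where
  "fa_rel R \<longleftrightarrow> regular {conv u v | u v. (u, v) \<in> R}"

definition cayley_automatic :: "gen list set \<Rightarrow> (gen list \<Rightarrow> heis) \<Rightarrow> bool" where
  "cayley_automatic L \<psi> \<longleftrightarrow> regular L \<and> bij_betw \<psi> L UNIV \<and>
     (\<forall>a \<in> {Ge, Gs, Gp, Gq}.
        fa_rel {(u, v). u \<in> L \<and> v \<in> L \<and> \<psi> v = hmult (\<psi> u) (gval a)})"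

definition psi_inv :: "gen list set \<Rightarrow> (gen list \<Rightarrow> heis) \<Rightarrow> heis \<Rightarrow> gen list" where
  "psi_inv L \<psi> g = the_inv_into L \<psi> g"

definition HH :: "heis set" where "HH = {(x, 0, z) | x z. True}"
definition HH1 :: "heis set" where "HH1 = {(x, 0, 0) | x. True}"
definition HH2 :: "heis set" where "HH2 = {(0, 0, z) | z. True}"

definition LH :: "gen list set \<Rightarrow> (gen list \<Rightarrow> heis) \<Rightarrow> gen list set" where
  "LH L \<psi> = {w \<in> L. \<psi> w \<in> HH}"
definition LH1 :: "gen list set \<Rightarrow> (gen list \<Rightarrow> heis) \<Rightarrow> gen list set" where
  "LH1 L \<psi> = {w \<in> L. \<psi> w \<in> HH1}"
definition LH2 :: "gen list set \<Rightarrow> (gen list \<Rightarrow> heis) \<Rightarrow> gen list set" where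
  "LH2 L \<psi> = {w \<in> L. \<psi> w \<in> HH2}"
definition w0 :: "gen list set \<Rightarrow> (gen list \<Rightarrow> heis) \<Rightarrow> gen list" where
  "w0 L \<psi> = psi_inv L \<psi> hone"

text \<open>Endomorphisms of H ([x;z] = (x,0,z)).\<close>
fun phiH :: "heis \<Rightarrow> heis" where "phiH (x, y, z) = (x, 0, x + z)"
fun p1H :: "heis \<Rightarrow> heis" where "p1H (x, y, z) = (x, 0, 0)"
fun p2H :: "heis \<Rightarrow> heis" where "p2H (x, y, z) = (0, 0, z)"

definition Rtheta :: "gen list set \<Rightarrow> (gen list \<Rightarrow> heis) \<Rightarrow> (heis \<Rightarrow> heis)
    \<Rightarrow> (gen list \<times> gen list) set" where
  "Rtheta L \<psi> \<theta> = {(w, psi_inv L \<psi> (\<theta> (\<psi> w))) | w. w \<in> LH L \<psi>}"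

definition restrL :: "'a set \<Rightarrow> ('a \<times> 'b) set \<Rightarrow> ('a \<times> 'b) set" where
  "restrL X R = {(u, v) \<in> R. u \<in> X}"
definition restrR :: "('a \<times> 'b) set \<Rightarrow> 'b set \<Rightarrow> ('a \<times> 'b) set" where
  "restrR R X = {(u, v) \<in> R. v \<in> X}"

definition fle :: "(nat \<Rightarrow> real) \<Rightarrow> (nat \<Rightarrow> real) \<Rightarrow> bool" where
  "fle g f \<longleftrightarrow> (\<exists>N K M :: nat. K > 0 \<and> M > 0 \<and>
                   (\<forall>n \<ge> N. g n \<le> real K * f (M * n)))"

definition fless :: "(nat \<Rightarrow> real) \<Rightarrow> (nat \<Rightarrow> real) \<Rightarrow> bool" where
  "fless g f \<longleftrightarrow> fle g f \<and> \<not> fle f g"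

text \<open>The class \<frakF>: functions nondecreasing and nonnegative on some [Q,\<infinity>)\<inter>\<nat>
  (values below Q are irrelevant for fle).\<close>
definition classF :: "(nat \<Rightarrow> real) \<Rightarrow> bool" where
  "classF f \<longleftrightarrow> (\<exists>Q. (\<forall>n \<ge> Q. 0 \<le> f n) \<and> (\<forall>m n. Q \<le> m \<longrightarrow> m \<le> n \<longrightarrow> f m \<le> f n))"

definition frake :: "nat \<Rightarrow> real" where "frake n = exp (real n)"

text \<open>h(n) = max{d_A(\<pi>(w),\<psi>(w)) : w \<in> L, |w| \<le> n}; set to 0 when the set is empty.\<close>
definition hfun :: "gen list set \<Rightarrow> (gen list \<Rightarrow> heis) \<Rightarrow> nat \<Rightarrow> real" where
  "hfun L \<psi> n = real (Max (insert 0 {dA (heval w) (\<psi> w) | w. w \<in> L \<and> length w \<le> n}))"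

end

theory Submission
  imports Defs
begin

text \<open>
  A regular relation that is single-valued on a set of inputs lengthens them by at most a constant:
  otherwise an automaton state repeats after the end of the input, and deleting the segment between
  the repetitions produces a second output. For \<open>R\<^sub>0\<close> and \<open>R\<^sub>2\<close> this means that passing from
  \<open>(x,0,0)\<close> to \<open>(x,0,x)\<close>, \<open>(x,0,2x)\<close> and \<open>(0,0,2x)\<close> adds boundedly many letters to the
  representatives; a simultaneous deletion in runs of \<open>R\<^sub>0\<close> and \<open>R\<^sub>2\<close> (the hypothesis on
  \<open>w\<^sub>0\<close> keeping the shortened word in \<open>L\<^sub>H\<close>) shows that the step back to \<open>(2x,0,0)\<close> does too.
  So \<open>\<psi>\<^sup>-\<^sup>1(2\<^sup>n,0,0)\<close> has length \<open>O(n)\<close>, whereas evaluating it moves the first coordinate by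
  only \<open>O(n)\<close>: the word distance between \<open>\<pi>(w)\<close> and \<open>\<psi>(w)\<close> is \<open>2\<^sup>n - O(n)\<close>.
\<close>

lemma map_fst_conv: "map fst (conv u v) = map Some u @ replicate (length v - length u) None"
  by (rule nth_equalityI) (auto simp: conv_def nth_append)

lemma map_snd_conv: "map snd (conv u v) = map Some v @ replicate (length u - length v) None"
  by (rule nth_equalityI) (auto simp: conv_def nth_append)

lemma conv_inj:
  assumes "conv u v = conv u' v'"
  shows "u = u'" and "v = v'"
proof -
  have strip: "map the (filter (\<lambda>x. x \<noteq> None) (map Some xs @ replicate n None)) = xs"
    for xs :: "'c list" and n
    by (induction xs) auto
  show "u = u'" using strip[of u] strip[of u'] arg_cong[OF assms, of "map fst"]
    by (metis map_fst_conv)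
  show "v = v'" using strip[of v] strip[of v'] arg_cong[OF assms, of "map snd"]
    by (metis map_snd_conv)
qed

lemma take_conv: "take i (conv u v) = conv (take i u) (take i v)"
  by (rule nth_equalityI) (auto simp: conv_def)

lemma drop_conv: "drop j (conv u v) = conv (drop j u) (drop j v)"
  by (rule nth_equalityI) (auto simp: conv_def)

text \<open>Padding symbols may only occur at the end of a convolution.\<close>

lemma conv_append:
  assumes "length u1 = length v1 \<or> u2 = [] \<and> length u1 \<le> length v1 \<or> v2 = [] \<and> length v1 \<le> length u1"
  shows "conv (u1 @ u2) (v1 @ v2) = conv u1 v1 @ conv u2 v2"
  using assms by (intro nth_equalityI) (auto simp: conv_def nth_append)

definition delete_segment :: "nat \<Rightarrow> nat \<Rightarrow> 'a list \<Rightarrow> 'a list" where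
  "delete_segment i j x = take i x @ drop j x"

lemma delete_segment_short: "length x \<le> i \<Longrightarrow> i \<le> j \<Longrightarrow> delete_segment i j x = x"
  by (simp add: delete_segment_def)

lemma length_delete_segment:
  "i \<le> j \<Longrightarrow> j \<le> length x \<Longrightarrow> length (delete_segment i j x) = length x - (j - i)"
  by (simp add: delete_segment_def)

lemma conv_delete_segment:
  assumes "i \<le> j" "length u \<le> i \<or> j \<le> length u" "length v \<le> i \<or> j \<le> length v"
  shows "conv (delete_segment i j u) (delete_segment i j v) = delete_segment i j (conv u v)"
proof -
  have "conv (take i u @ drop j u) (take i v @ drop j v) = conv (take i u) (take i v) @ conv (drop j u) (drop j v)"
    using assms by (intro conv_append) auto
  then show ?thesis by (simp add: delete_segment_def take_conv drop_conv)
qed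

lemma regular_state_map:
  assumes "regular L"
  obtains \<sigma> :: "'a list \<Rightarrow> nat"
  where "finite (range \<sigma>)" and "\<And>x y z. \<sigma> x = \<sigma> y \<Longrightarrow> x @ z \<in> L \<longleftrightarrow> y @ z \<in> L"
proof -
  obtain Qs :: "nat set" and \<delta> q0 F where "finite Qs" "q0 \<in> Qs" and closed: "\<forall>q\<in>Qs. \<forall>a. \<delta> q a \<in> Qs"
    and L: "L = {w. foldl \<delta> q0 w \<in> F}"
    using assms unfolding regular_def by blast
  have "foldl \<delta> q w \<in> Qs" if "q \<in> Qs" for q w
    using that closed by (induction w arbitrary: q) auto
  then have "range (foldl \<delta> q0) \<subseteq> Qs" using \<open>q0 \<in> Qs\<close> by blast
  then show thesis
    using that[of "foldl \<delta> q0"] \<open>finite Qs\<close> by (simp add: L finite_subset)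
qed

lemma fa_rel_state_map:
  assumes "fa_rel R"
  obtains \<sigma> :: "('a option \<times> 'b option) list \<Rightarrow> nat"
  where "finite (range \<sigma>)"
    and "\<And>u v i j. (u, v) \<in> R \<Longrightarrow> i \<le> j \<Longrightarrow> length u \<le> i \<or> j \<le> length u \<Longrightarrow>
           length v \<le> i \<or> j \<le> length v \<Longrightarrow> \<sigma> (take i (conv u v)) = \<sigma> (take j (conv u v)) \<Longrightarrow>
           (delete_segment i j u, delete_segment i j v) \<in> R"
proof -
  let ?C = "{conv u v | u v. (u, v) \<in> R}"
  obtain \<sigma> :: "('a option \<times> 'b option) list \<Rightarrow> nat" where fin: "finite (range \<sigma>)"
    and cong: "\<And>x y z. \<sigma> x = \<sigma> y \<Longrightarrow> x @ z \<in> ?C \<longleftrightarrow> y @ z \<in> ?C"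
    using regular_state_map[OF assms[unfolded fa_rel_def]] by blast
  have conv_mem: "(u, v) \<in> R" if mem: "conv u v \<in> ?C" for u v
  proof -
    obtain u' v' where "conv u v = conv u' v'" "(u', v') \<in> R" using mem by blast
    then show ?thesis using conv_inj by metis
  qed
  show thesis
  proof (rule that[OF fin])
    fix u v i j
    assume uv: "(u, v) \<in> R" and ij: "i \<le> j"
      and u: "length u \<le> i \<or> j \<le> length u" and v: "length v \<le> i \<or> j \<le> length v"
      and state: "\<sigma> (take i (conv u v)) = \<sigma> (take j (conv u v))"
    have "take j (conv u v) @ drop j (conv u v) \<in> ?C" using uv by simp blast
    then have "delete_segment i j (conv u v) \<in> ?C"
      using cong[OF state] by (simp add: delete_segment_def)
    then show "(delete_segment i j u, delete_segment i j v) \<in> R"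
      by (intro conv_mem) (simp add: conv_delete_segment[OF ij u v])
  qed
qed

lemma pigeonhole_window:
  assumes "finite S" and "\<And>t. f t \<in> S"
  shows "\<exists>i j. lo \<le> i \<and> i < j \<and> j \<le> lo + card S \<and> f i = f j"
proof -
  have "f ` {lo..lo + card S} \<subseteq> S" using assms(2) by blast
  then have "card (f ` {lo..lo + card S}) \<le> card S" using \<open>finite S\<close> by (rule card_mono[rotated])
  then have "\<not> inj_on f {lo..lo + card S}" by (intro pigeonhole) simp
  then obtain a b where ab: "a \<in> {lo..lo + card S}" "b \<in> {lo..lo + card S}" "a \<noteq> b" "f a = f b"
    unfolding inj_on_def by blast
  show ?thesis
  proof (cases "a < b")
    case True
    then show ?thesis using ab by auto
  next
    case False
    then show ?thesis using ab by (intro exI[of _ b] exI[of _ a]) auto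
  qed
qed

lemma pigeonhole_window_avoiding:
  assumes "finite S" and "\<And>t. f t \<in> S" and "m + 2 * card S < n"
  obtains i j where "m \<le> i" "i < j" "j < n" "p \<le> i \<or> j \<le> p" "f i = f j"
proof -
  obtain lo where lo: "m \<le> lo" "lo + card S < n" "p \<le> lo \<or> lo + card S \<le> p"
  proof (cases "p < m + card S")
    case True
    show thesis by (rule that[of "max m p"]) (use True assms(3) in auto)
  next
    case False
    show thesis by (rule that[of m]) (use False assms(3) in auto)
  qed
  have "\<exists>i j. lo \<le> i \<and> i < j \<and> j \<le> lo + card S \<and> f i = f j"
    by (rule pigeonhole_window[OF assms(1,2)])
  then obtain i j where ij: "lo \<le> i" "i < j" "j \<le> lo + card S" "f i = f j" by blast
  have "p \<le> i \<or> j \<le> p" using lo(3) ij(1,3) by linarith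
  then show thesis using lo ij by (intro that[of i j]) simp_all
qed

lemma fa_rel_single_valued_length_bound:
  assumes "fa_rel R" and single_valued: "\<And>u v v'. u \<in> X \<Longrightarrow> (u, v) \<in> R \<Longrightarrow> (u, v') \<in> R \<Longrightarrow> v' = v"
  obtains k where "\<And>u v. u \<in> X \<Longrightarrow> (u, v) \<in> R \<Longrightarrow> length v \<le> length u + k"
proof -
  obtain \<sigma> :: "('a option \<times> 'b option) list \<Rightarrow> nat" where fin: "finite (range \<sigma>)"
    and cut: "\<And>u v i j. (u, v) \<in> R \<Longrightarrow> i \<le> j \<Longrightarrow> length u \<le> i \<or> j \<le> length u \<Longrightarrow>
           length v \<le> i \<or> j \<le> length v \<Longrightarrow> \<sigma> (take i (conv u v)) = \<sigma> (take j (conv u v)) \<Longrightarrow>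
           (delete_segment i j u, delete_segment i j v) \<in> R"
    using fa_rel_state_map[OF assms(1)] by blast
  show thesis
  proof (rule that[of "card (range \<sigma>)"], rule ccontr)
    fix u v
    assume "u \<in> X" and uv: "(u, v) \<in> R" and "\<not> length v \<le> length u + card (range \<sigma>)"
    have "\<exists>i j. length u \<le> i \<and> i < j \<and> j \<le> length u + card (range \<sigma>) \<and>
        \<sigma> (take i (conv u v)) = \<sigma> (take j (conv u v))"
      by (rule pigeonhole_window[OF fin]) simp
    then obtain i j where ij: "length u \<le> i" "i < j" "j \<le> length u + card (range \<sigma>)"
      and state: "\<sigma> (take i (conv u v)) = \<sigma> (take j (conv u v))"
      by blast
    have long: "j \<le> length v" using ij \<open>\<not> _\<close> by linarith
    have "(delete_segment i j u, delete_segment i j v) \<in> R"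
      using ij long by (intro cut[OF uv _ _ _ state]) simp_all
    then have "(u, delete_segment i j v) \<in> R" using ij by (simp add: delete_segment_short)
    then have "delete_segment i j v = v" by (rule single_valued[OF \<open>u \<in> X\<close> uv])
    then show False using length_delete_segment[of i j v] ij long by simp
  qed
qed

lemma hmult_assoc: "hmult (hmult a b) c = hmult a (hmult b c)"
  by (cases a; cases b; cases c) (simp add: algebra_simps)

lemma fst_hmult [simp]: "fst (hmult a b) = fst a + fst b"
  by (cases a; cases b) simp

lemma hmult_hone [simp]: "hmult hone a = a" "hmult a hone = a"
  by (cases a, simp add: hone_def)+

lemma heval_Nil [simp]: "heval [] = hone"
  by (simp add: heval_def)

lemma heval_snoc [simp]: "heval (w @ [a]) = hmult (heval w) (gval a)"
  by (simp add: heval_def)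

lemma heval_append: "heval (u @ v) = hmult (heval u) (heval v)"
  by (induction v rule: rev_induct) (simp_all add: hmult_assoc flip: append_assoc)

lemma heval_replicate:
  "heval (replicate n a) = (int n * fst (gval a), int n * fst (snd (gval a)), int n * snd (snd (gval a)))"
proof (induction n)
  case (Suc n)
  have "replicate (Suc n) a = replicate n a @ [a]" by (simp add: replicate_append_same)
  then show ?case using Suc by (cases a) (simp_all add: algebra_simps)
qed (simp add: hone_def)

lemma heval_surj: "\<exists>w. heval w = g"
proof -
  have multiple: "\<exists>w. heval w = (k * x, k * y, k * z)"
    if "gval a = (x, y, z)" and "gval a' = (- x, - y, - z)" for k x y z a a'
  proof (cases "k \<ge> 0")
    case True
    then show ?thesis using that heval_replicate[of "nat k" a] by auto
  next
    case False
    then show ?thesis using that heval_replicate[of "nat (- k)" a'] by auto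
  qed
  obtain x y z where g: "g = (x, y, z)" by (cases g)
  obtain wx where "heval wx = (x, 0, 0)" using multiple[of Gs 1 0 0 Gs_inv] by auto
  obtain wy where "heval wy = (0, y, 0)" using multiple[of Gp 0 1 0 Gp_inv] by auto
  obtain wz where "heval wz = (0, 0, z - x * y)" using multiple[of Gq 0 0 1 Gq_inv] by auto
  with \<open>heval wx = _\<close> \<open>heval wy = _\<close> have "heval (wx @ wy @ wz) = g" by (simp add: heval_append g)
  then show ?thesis by blast
qed

lemma abs_fst_heval_le: "\<bar>fst (heval w)\<bar> \<le> int (length w)"
proof (induction w rule: rev_induct)
  case (snoc a w)
  have "\<bar>fst (gval a)\<bar> \<le> 1" by (cases a) auto
  then show ?case using snoc by simp
qed (simp add: hone_def)

lemma abs_fst_diff_le_dA: "\<bar>fst h - fst g\<bar> \<le> int (dA g h)"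
proof -
  obtain x y z where g: "g = (x, y, z)" by (cases g)
  have inverse: "hmult g (- x, - y, x * y - z) = hone" by (simp add: g hone_def)
  obtain w where "heval w = hmult (- x, - y, x * y - z) h" using heval_surj by blast
  then have "hmult g (heval w) = h" using inverse by (simp flip: hmult_assoc)
  then have "\<exists>w'. length w' = length w \<and> hmult g (heval w') = h" by blast
  then have "\<exists>w'. length w' = dA g h \<and> hmult g (heval w') = h"
    unfolding dA_def by (rule LeastI)
  then obtain w where w: "length w = dA g h" "hmult g (heval w) = h" by blast
  then have "fst h = fst g + fst (heval w)" by auto
  then show ?thesis using abs_fst_heval_le[of w] w(1) by simp
qed

lemma finite_UNIV_gen: "finite (UNIV :: gen set)"
proof -
  have "(UNIV :: gen set) = {Ge, Gs, Gp, Gq, Gs_inv, Gp_inv, Gq_inv}"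
    using gen.exhaust by auto
  then show ?thesis by (metis finite.emptyI finite.insertI)
qed

lemma dA_le_hfun:
  assumes "w \<in> L" "length w \<le> n"
  shows "real (dA (heval w) (\<psi> w)) \<le> hfun L \<psi> n"
proof -
  have "finite {w :: gen list. set w \<subseteq> UNIV \<and> length w \<le> n}"
    by (rule finite_lists_length_le) (simp add: finite_UNIV_gen)
  then have "finite {dA (heval w) (\<psi> w) | w. w \<in> L \<and> length w \<le> n}"
    by (rule finite_subset[rotated, OF finite_imageI]) auto
  then show ?thesis
    using assms unfolding hfun_def by (simp add: Max_ge_iff) blast
qed

lemma fle_trans:
  assumes "fle g h" and "fle h f"
  shows "fle g f"
proof -
  obtain N1 K1 M1 :: nat where "K1 > 0" "M1 > 0" and gh: "\<forall>n\<ge>N1. g n \<le> real K1 * h (M1 * n)"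
    using assms(1) unfolding fle_def by blast
  obtain N2 K2 M2 :: nat where "K2 > 0" "M2 > 0" and hf: "\<forall>n\<ge>N2. h n \<le> real K2 * f (M2 * n)"
    using assms(2) unfolding fle_def by blast
  have "g n \<le> real (K1 * K2) * f (M2 * M1 * n)" if "n \<ge> N1 + N2" for n
  proof -
    have "n \<le> M1 * n" using \<open>M1 > 0\<close> by simp
    then have "N2 \<le> M1 * n" using that by linarith
    then have "h (M1 * n) \<le> real K2 * f (M2 * (M1 * n))" using hf by blast
    then have "real K1 * h (M1 * n) \<le> real K1 * (real K2 * f (M2 * (M1 * n)))"
      by (rule mult_left_mono) simp
    moreover have "g n \<le> real K1 * h (M1 * n)" using gh that by simp
    ultimately show ?thesis by (simp add: mult.assoc mult.left_commute)
  qed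
  moreover have "K1 * K2 > 0" "M2 * M1 > 0" using \<open>K1 > 0\<close> \<open>K2 > 0\<close> \<open>M1 > 0\<close> \<open>M2 > 0\<close> by simp_all
  ultimately show ?thesis unfolding fle_def by blast
qed

lemma linear_le_four_power:
  fixes b n :: nat
  assumes "b < n"
  shows "b * n \<le> 4 ^ n"
proof -
  have "b * n \<le> n * n" using assms by simp
  also have "\<dots> \<le> 2 ^ n * 2 ^ n" using less_exp[of n] by (intro mult_mono) simp_all
  also have "\<dots> = 4 ^ n" by (simp flip: power_mult_distrib)
  finally show ?thesis .
qed

lemma exp_le_four_power: "exp (real n) \<le> 4 ^ n"
proof -
  have "exp (real n) = exp 1 ^ n" by (simp flip: exp_of_nat_mult)
  also have "\<dots> \<le> 4 ^ n" using exp_le by (intro power_mono) simp_all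
  finally show ?thesis .
qed

locale heisenberg_representation =
  fixes L :: "gen list set" and \<psi> :: "gen list \<Rightarrow> heis"
  assumes bij: "bij_betw \<psi> L UNIV"
begin

abbreviation rep :: "heis \<Rightarrow> gen list" where
  "rep \<equiv> psi_inv L \<psi>"

lemma rep_in: "rep g \<in> L"
  using bij by (simp add: psi_inv_def bij_betw_def the_inv_into_into)

lemma psi_rep [simp]: "\<psi> (rep g) = g"
  using bij by (simp add: psi_inv_def bij_betw_def f_the_inv_into_f)

lemma rep_psi: "w \<in> L \<Longrightarrow> rep (\<psi> w) = w"
  using bij by (simp add: psi_inv_def bij_betw_def the_inv_into_f_f)

lemma rep_inject [simp]: "rep g = rep h \<longleftrightarrow> g = h"
  by (metis psi_rep)

lemma rep_LH [simp]: "rep (x, 0, z) \<in> LH L \<psi>"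
  using rep_in by (simp add: LH_def HH_def)

lemma w0_eq: "w0 L \<psi> = rep hone"
  by (simp add: w0_def)

lemma graph_restrL_iff:
  assumes "restrL (LH L \<psi>) R = Rtheta L \<psi> \<theta>" and "u \<in> LH L \<psi>"
  shows "(u, v) \<in> R \<longleftrightarrow> v = rep (\<theta> (\<psi> u))"
proof -
  have "(u, v) \<in> R \<longleftrightarrow> (u, v) \<in> restrL (LH L \<psi>) R" using assms(2) by (simp add: restrL_def)
  then show ?thesis using assms by (auto simp: Rtheta_def)
qed

lemma abs_fst_le_hfun:
  assumes "length (rep g) \<le> n"
  shows "real_of_int \<bar>fst g\<bar> - real n \<le> hfun L \<psi> n"
proof -
  have "\<bar>fst g\<bar> - int n \<le> int (dA (heval (rep g)) g)"
    using abs_fst_diff_le_dA[of g "heval (rep g)"] abs_fst_heval_le[of "rep g"] assms by linarith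
  then have "real_of_int (\<bar>fst g\<bar> - int n) \<le> real_of_int (int (dA (heval (rep g)) g))"
    by (simp only: of_int_le_iff)
  moreover have "real (dA (heval (rep g)) g) \<le> hfun L \<psi> n"
    using dA_le_hfun[where \<psi> = \<psi>, OF rep_in assms] by simp
  ultimately show ?thesis by simp
qed

lemma length_rep_endomorphism_bound:
  assumes "fa_rel R" and graph: "restrL (LH L \<psi>) R = Rtheta L \<psi> \<theta>"
  obtains k where "\<And>x z. length (rep (\<theta> (x, 0, z))) \<le> length (rep (x, 0, z)) + k"
proof -
  have "v' = v" if "u \<in> LH L \<psi>" "(u, v) \<in> R" "(u, v') \<in> R" for u v v'
    using that graph_restrL_iff[OF graph \<open>u \<in> LH L \<psi>\<close>] by simp
  then obtain k where k: "\<And>u v. u \<in> LH L \<psi> \<Longrightarrow> (u, v) \<in> R \<Longrightarrow> length v \<le> length u + k"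
    using fa_rel_single_valued_length_bound[OF assms(1)] by blast
  show thesis
  proof (rule that)
    fix x z
    have "(rep (x, 0, z), rep (\<theta> (x, 0, z))) \<in> R" using graph_restrL_iff[OF graph rep_LH] by simp
    then show "length (rep (\<theta> (x, 0, z))) \<le> length (rep (x, 0, z)) + k" by (rule k[OF rep_LH])
  qed
qed

end

locale phi_p2_automatic = heisenberg_representation +
  fixes R0 R2 :: "(gen list \<times> gen list) set"
  assumes fa_R0: "fa_rel R0" and fa_R2: "fa_rel R2"
    and R0_graph: "restrL (LH L \<psi>) R0 = Rtheta L \<psi> phiH"
    and R2_graph: "restrL (LH L \<psi>) R2 = Rtheta L \<psi> p2H"
    and R2_w0: "restrR R2 {w0 L \<psi>} = restrR (Rtheta L \<psi> p2H) {w0 L \<psi>}"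
begin

lemma R2_w0D:
  assumes "(u, rep hone) \<in> R2"
  shows "u \<in> LH L \<psi>" and "p2H (\<psi> u) = hone"
proof -
  have "(u, rep hone) \<in> restrR R2 {w0 L \<psi>}" using assms by (simp add: restrR_def w0_eq)
  then have "(u, rep hone) \<in> restrR (Rtheta L \<psi> p2H) {w0 L \<psi>}" by (simp only: R2_w0)
  then have "(u, rep hone) \<in> Rtheta L \<psi> p2H" by (simp add: restrR_def w0_eq)
  then show "u \<in> LH L \<psi>" and "p2H (\<psi> u) = hone" unfolding Rtheta_def by auto
qed

lemma rep_x_determined:
  assumes "(A, C) \<in> R0" and "(C, rep (0, 0, y)) \<in> R2" and "(A, rep hone) \<in> R2"
  shows "A = rep (y, 0, 0)"
proof -
  have A: "A \<in> LH L \<psi>" and p2: "p2H (\<psi> A) = hone" using R2_w0D[OF assms(3)] by auto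
  from A obtain x z where "\<psi> A = (x, 0, z)" by (auto simp: LH_def HH_def)
  with p2 have psi_A: "\<psi> A = (x, 0, 0)" by (simp add: hone_def)
  then have "C = rep (x, 0, x)" using graph_restrL_iff[OF R0_graph A] assms(1) by simp
  then have "rep (0, 0, y) = rep (0, 0, x)"
    using graph_restrL_iff[OF R2_graph rep_LH[of x x]] assms(2) by simp
  then have "\<psi> A = (y, 0, 0)" using psi_A by simp
  then show ?thesis using rep_psi[of A] A by (simp add: LH_def)
qed

text \<open>
  If \<open>A = \<psi>\<^sup>-\<^sup>1(y,0,0)\<close> were much longer than \<open>B = \<psi>\<^sup>-\<^sup>1(0,0,y)\<close> and \<open>W = w\<^sub>0\<close>, a window
  past the ends of \<open>B\<close> and \<open>W\<close> on which all three automata repeat their state could be cut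
  out of \<open>A\<close> and \<open>C = \<psi>\<^sup>-\<^sup>1(y,0,y)\<close>; by \<open>rep_x_determined\<close> the shorter word would
  again be \<open>A\<close>.
\<close>

lemma length_rep_x_le_z:
  obtains c where "\<And>y. length (rep (y, 0, 0)) \<le> length (rep (0, 0, y)) + c"
proof -
  obtain \<sigma>0 :: "(gen option \<times> gen option) list \<Rightarrow> nat" where fin0: "finite (range \<sigma>0)"
    and cut0: "\<And>u v i j. (u, v) \<in> R0 \<Longrightarrow> i \<le> j \<Longrightarrow> length u \<le> i \<or> j \<le> length u \<Longrightarrow>
           length v \<le> i \<or> j \<le> length v \<Longrightarrow> \<sigma>0 (take i (conv u v)) = \<sigma>0 (take j (conv u v)) \<Longrightarrow>
           (delete_segment i j u, delete_segment i j v) \<in> R0"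
    using fa_rel_state_map[OF fa_R0] by blast
  obtain \<sigma>2 :: "(gen option \<times> gen option) list \<Rightarrow> nat" where fin2: "finite (range \<sigma>2)"
    and cut2: "\<And>u v i j. (u, v) \<in> R2 \<Longrightarrow> i \<le> j \<Longrightarrow> length u \<le> i \<or> j \<le> length u \<Longrightarrow>
           length v \<le> i \<or> j \<le> length v \<Longrightarrow> \<sigma>2 (take i (conv u v)) = \<sigma>2 (take j (conv u v)) \<Longrightarrow>
           (delete_segment i j u, delete_segment i j v) \<in> R2"
    using fa_rel_state_map[OF fa_R2] by blast
  define S where "S = range \<sigma>0 \<times> range \<sigma>2 \<times> range \<sigma>2"
  define N where "N = card S"
  have "finite S" using fin0 fin2 by (simp add: S_def)
  show thesis
  proof (rule that[of "length (rep hone) + 2 * N"], rule ccontr)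
    fix y
    define A B C W where "A = rep (y, 0, 0)" and "B = rep (0, 0, y)" and "C = rep (y, 0, y)"
      and "W = rep hone"
    define m where "m = max (length B) (length W)"
    assume "\<not> length (rep (y, 0, 0)) \<le> length (rep (0, 0, y)) + (length (rep hone) + 2 * N)"
    then have long: "m + 2 * N < length A" by (auto simp: A_def B_def W_def m_def)
    have AC: "(A, C) \<in> R0" using graph_restrL_iff[OF R0_graph rep_LH] by (simp add: A_def C_def)
    have CB: "(C, B) \<in> R2" using graph_restrL_iff[OF R2_graph rep_LH] by (simp add: B_def C_def)
    have AW: "(A, W) \<in> R2"
      using graph_restrL_iff[OF R2_graph rep_LH] by (simp add: A_def W_def hone_def)
    define f where "f t = (\<sigma>0 (take t (conv A C)), \<sigma>2 (take t (conv C B)), \<sigma>2 (take t (conv A W)))"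
      for t
    have "f t \<in> S" for t by (simp add: S_def f_def)
    then obtain i j where ij: "m \<le> i" "i < j" "j < length A" and C_ok: "length C \<le> i \<or> j \<le> length C"
      and "f i = f j"
      using pigeonhole_window_avoiding[where f = f and p = "length C", OF \<open>finite S\<close> _ long[unfolded N_def]]
      by blast
    then have states: "\<sigma>0 (take i (conv A C)) = \<sigma>0 (take j (conv A C))"
      "\<sigma>2 (take i (conv C B)) = \<sigma>2 (take j (conv C B))"
      "\<sigma>2 (take i (conv A W)) = \<sigma>2 (take j (conv A W))"
      by (simp_all add: f_def)
    have A_long: "j \<le> length A" using ij by simp
    have BW: "length B \<le> i" "length W \<le> i" using ij by (auto simp: m_def)
    then have short: "delete_segment i j B = B" "delete_segment i j W = W"
      using ij(2) by (simp_all add: delete_segment_short)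
    have "(delete_segment i j A, delete_segment i j C) \<in> R0"
      using ij(2) A_long C_ok by (intro cut0[OF AC _ _ _ states(1)]) simp_all
    moreover have "(delete_segment i j C, delete_segment i j B) \<in> R2"
      using ij(2) C_ok BW by (intro cut2[OF CB _ _ _ states(2)]) simp_all
    then have "(delete_segment i j C, B) \<in> R2" by (simp only: short)
    moreover have "(delete_segment i j A, delete_segment i j W) \<in> R2"
      using ij(2) A_long BW by (intro cut2[OF AW _ _ _ states(3)]) simp_all
    then have "(delete_segment i j A, W) \<in> R2" by (simp only: short)
    ultimately have "delete_segment i j A = rep (y, 0, 0)"
      unfolding B_def W_def by (rule rep_x_determined)
    moreover have "length (delete_segment i j A) < length A"
      using ij A_long by (simp add: length_delete_segment)
    ultimately show False by (simp add: A_def)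
  qed
qed

lemma length_rep_double:
  obtains D where "\<And>x. length (rep (2 * x, 0, 0)) \<le> length (rep (x, 0, 0)) + D"
proof -
  obtain k0 where k0: "\<And>x z. length (rep (phiH (x, 0, z))) \<le> length (rep (x, 0, z)) + k0"
    using length_rep_endomorphism_bound[OF fa_R0 R0_graph] by blast
  obtain k2 where k2: "\<And>x z. length (rep (p2H (x, 0, z))) \<le> length (rep (x, 0, z)) + k2"
    using length_rep_endomorphism_bound[OF fa_R2 R2_graph] by blast
  obtain c where c: "\<And>y. length (rep (y, 0, 0)) \<le> length (rep (0, 0, y)) + c"
    using length_rep_x_le_z by blast
  show thesis
  proof (rule that)
    fix x :: int
    have "length (rep (x, 0, x)) \<le> length (rep (x, 0, 0)) + k0" using k0[of x 0] by simp
    moreover have "length (rep (x, 0, 2 * x)) \<le> length (rep (x, 0, x)) + k0"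
      using k0[of x x] unfolding mult_2 by simp
    moreover have "length (rep (0, 0, 2 * x)) \<le> length (rep (x, 0, 2 * x)) + k2"
      using k2[of x "2 * x"] by simp
    ultimately show "length (rep (2 * x, 0, 0)) \<le> length (rep (x, 0, 0)) + (2 * k0 + k2 + c)"
      using c[of "2 * x"] by linarith
  qed
qed

lemma length_rep_power2:
  obtains M where "\<And>n. n \<ge> 1 \<Longrightarrow> length (rep (2 ^ n, 0, 0)) \<le> M * n"
proof -
  obtain D where D: "\<And>x. length (rep (2 * x, 0, 0)) \<le> length (rep (x, 0, 0)) + D"
    using length_rep_double by blast
  define c where "c = length (rep (1, 0, 0))"
  have power: "length (rep (2 ^ n, 0, 0)) \<le> c + n * D" for n
  proof (induction n)
    case (Suc n)
    then show ?case using D[of "2 ^ n"] by simp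
  qed (simp add: c_def)
  have "length (rep (2 ^ n, 0, 0)) \<le> (c + D) * n" if "n \<ge> 1" for n
  proof -
    have "c \<le> c * n" using mult_le_mono2[OF that, of c] by (simp only: mult_1_right)
    moreover have "(c + D) * n = c * n + n * D" by (simp add: algebra_simps)
    ultimately show ?thesis using power[of n] by linarith
  qed
  then show thesis by (rule that)
qed

lemma exp_fle_hfun: "fle frake (hfun L \<psi>)"
proof -
  obtain M where M: "\<And>n. n \<ge> 1 \<Longrightarrow> length (rep (2 ^ n, 0, 0)) \<le> M * n"
    using length_rep_power2 by blast
  define K where "K = 2 * M + 1"
  have "frake n \<le> real 2 * hfun L \<psi> (K * n)" if "2 * K < n" for n
  proof -
    have "length (rep (2 ^ (2 * n), 0, 0)) \<le> M * (2 * n)" using that by (intro M) simp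
    also have "\<dots> \<le> K * n" by (simp add: K_def)
    finally have "length (rep (4 ^ n, 0, 0)) \<le> K * n" by (simp add: power_mult)
    from abs_fst_le_hfun[OF this] have "4 ^ n - real (K * n) \<le> hfun L \<psi> (K * n)" by simp
    moreover have "2 * K * n \<le> 4 ^ n" using that by (rule linear_le_four_power)
    then have "real (2 * K * n) \<le> real (4 ^ n)" by (simp only: of_nat_le_iff)
    ultimately show ?thesis using exp_le_four_power[of n] by (simp add: frake_def)
  qed
  then show ?thesis
    unfolding fle_def by (intro exI[of _ "2 * K + 1"] exI[of _ 2] exI[of _ K]) (simp add: K_def)
qed

end

theorem mainTheorem12:
  fixes L :: "gen list set" and \<psi> :: "gen list \<Rightarrow> heis"
  assumes "cayley_automatic L \<psi>"
    and "\<exists>R0 R1 R2 :: (gen list \<times> gen list) set.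
           fa_rel R0 \<and> fa_rel R1 \<and> fa_rel R2 \<and>
           restrL (LH L \<psi>) R0 = Rtheta L \<psi> phiH \<and>
           restrR R1 (LH1 L \<psi>) = Rtheta L \<psi> p1H \<and>
           restrL (LH L \<psi>) R2 = Rtheta L \<psi> p2H \<and>
           restrR R2 {w0 L \<psi>} = restrR (Rtheta L \<psi> p2H) {w0 L \<psi>}"
  shows "fle frake (hfun L \<psi>) \<and>
         (\<forall>f. classF f \<and> fless f frake \<longrightarrow> \<not> fle (hfun L \<psi>) f)"
proof -
  obtain R0 R2 where "fa_rel R0" "fa_rel R2"
    "restrL (LH L \<psi>) R0 = Rtheta L \<psi> phiH" "restrL (LH L \<psi>) R2 = Rtheta L \<psi> p2H"
    "restrR R2 {w0 L \<psi>} = restrR (Rtheta L \<psi> p2H) {w0 L \<psi>}"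
    using assms(2) by blast
  then interpret phi_p2_automatic L \<psi> R0 R2
    using assms(1) by unfold_locales (simp_all add: cayley_automatic_def)
  have "fle frake (hfun L \<psi>)" by (rule exp_fle_hfun)
  moreover have "\<not> fle (hfun L \<psi>) f" if "fless f frake" for f
    using that fle_trans[OF \<open>fle frake (hfun L \<psi>)\<close>] by (auto simp: fless_def)
  ultimately show ?thesis by blast
qed

end
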